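(* Let $S$ be a finite set, $Z\subseteq S$, and $\mathcal{A}\subseteq\{X\subseteq S\mid Z\subseteq X\}$. Let $I_{\mathcal{A}}=\{\{Y\mid Z\subseteq Y\subseteq X\}\mid X\in\mathcal{A}\}$ and $I'_{\mathcal{A}}=\{2^X\mid X\in\mathcal{A}\}$. Then for every $\mathcal{C}\in\bullet(I_{\mathcal{A}})$, the configuration $\mathrm{lift}_Z(\mathcal{C})=\{X\subseteq S\mid X\cup Z\in\mathcal{C}\}$ satisfies $\mathrm{lift}_Z(\mathcal{C})\in\bullet(I'_{\mathcal{A}})$.
   Context: Here $2^X=\{Y\subseteq S\mid Y\subseteq X\}$. For sets $A,B$, $A\,\dot\cup\,B=A\cup B$ is defined only when $A\cap B=\emptyset$, and $A\,\dot\setminus\,B=A\setminus B$ is defined only when $B\subseteq A$. For a finite family $\mathcal{G}$ of sets, $\bullet(\mathcal{G})$ is the smallest family of sets containing $\emptyset$ and every member of $\mathcal{G}$ and closed under all well-defined disjoint unions and subset complements. *)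

theory Defs
  imports Main
begin

inductive_set bullet :: "'b set set \<Rightarrow> 'b set set" for G :: "'b set set" where
  bullet_empty: "{} \<in> bullet G"
| bullet_base: "A \<in> G \<Longrightarrow> A \<in> bullet G"
| bullet_disj_union: "A \<in> bullet G \<Longrightarrow> B \<in> bullet G \<Longrightarrow> A \<inter> B = {} \<Longrightarrow> A \<union> B \<in> bullet G"
| bullet_subset_diff: "A \<in> bullet G \<Longrightarrow> B \<in> bullet G \<Longrightarrow> B \<subseteq> A \<Longrightarrow> A - B \<in> bullet G"

definition powS :: "'a set \<Rightarrow> 'a set \<Rightarrow> 'a set set" where
  "powS S X = {Y. Y \<subseteq> S \<and> Y \<subseteq> X}"

definition lift :: "'a set \<Rightarrow> 'a set \<Rightarrow> 'a set set \<Rightarrow> 'a set set" where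
  "lift S Z C = {X. X \<subseteq> S \<and> X \<union> Z \<in> C}"

end

theory Submission
  imports Defs
begin

text \<open>The lift is the preimage of \<open>C\<close> under \<open>X \<mapsto> X \<union> Z\<close>, restricted to subsets of \<open>S\<close>.
Preimages commute with disjoint unions and subset complements, so it suffices to check the
generators: the interval \<open>[Z, X]\<close> lifts to \<open>2\<^sup>X\<close>.\<close>

lemma bullet_restricted_preimage:
  assumes "C \<in> bullet G"
    and "\<And>A. A \<in> G \<Longrightarrow> D \<inter> g -` A \<in> bullet H"
  shows "D \<inter> g -` C \<in> bullet H"
  using assms(1)
proof (induction rule: bullet.induct)
  case bullet_empty
  then show ?case by (simp add: bullet.bullet_empty)
next
  case (bullet_base A)
  then show ?case by (rule assms(2))
next
  case (bullet_disj_union A B)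
  have "D \<inter> g -` (A \<union> B) = (D \<inter> g -` A) \<union> (D \<inter> g -` B)" by blast
  moreover have "(D \<inter> g -` A) \<inter> (D \<inter> g -` B) = {}" using bullet_disj_union.hyps(3) by blast
  ultimately show ?case using bullet_disj_union.IH by (simp add: bullet.bullet_disj_union)
next
  case (bullet_subset_diff A B)
  have "D \<inter> g -` (A - B) = (D \<inter> g -` A) - (D \<inter> g -` B)" by blast
  moreover have "D \<inter> g -` B \<subseteq> D \<inter> g -` A" using bullet_subset_diff.hyps(3) by blast
  ultimately show ?case using bullet_subset_diff.IH by (simp add: bullet.bullet_subset_diff)
qed

lemma lift_eq_restricted_preimage: "lift S Z C = Pow S \<inter> (\<lambda>X. X \<union> Z) -` C"
  by (auto simp: lift_def)

lemma lift_interval: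
  assumes "Z \<subseteq> X"
  shows "lift S Z {Y. Z \<subseteq> Y \<and> Y \<subseteq> X} = powS S X"
  using assms by (auto simp: lift_def powS_def)

theorem lemma6p10:
  fixes S Z :: "'a set" and \<A> :: "'a set set" and C :: "'a set set"
  assumes "finite S" and "Z \<subseteq> S" and "\<A> \<subseteq> {X. X \<subseteq> S \<and> Z \<subseteq> X}"
    and "C \<in> bullet {{Y. Z \<subseteq> Y \<and> Y \<subseteq> X} | X. X \<in> \<A>}"
  shows "lift S Z C \<in> bullet {powS S X | X. X \<in> \<A>}"
proof -
  have "Pow S \<inter> (\<lambda>X. X \<union> Z) -` A \<in> bullet {powS S X | X. X \<in> \<A>}"
    if "A \<in> {{Y. Z \<subseteq> Y \<and> Y \<subseteq> X} | X. X \<in> \<A>}" for A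
  proof -
    from that obtain X where "X \<in> \<A>" and A: "A = {Y. Z \<subseteq> Y \<and> Y \<subseteq> X}" by blast
    with assms(3) have "lift S Z A = powS S X" using lift_interval by blast
    with \<open>X \<in> \<A>\<close> show ?thesis by (auto simp: lift_eq_restricted_preimage intro: bullet.bullet_base)
  qed
  then show ?thesis
    unfolding lift_eq_restricted_preimage using assms(4) by (rule bullet_restricted_preimage[rotated])
qed

end
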